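(* Let $\kappa$ be an infinite cardinal and let $B(\kappa)=(\kappa^{\aleph_0},\mathcal U)$ be the countable power of the discrete uniform space of cardinality $\kappa$. Then $B(\kappa)$ is co-universal in the class of all non-archimedean uniform spaces whose uniformity is induced by a complete metric and whose topological weight is $\le\kappa$: that is, $B(\kappa)$ belongs to this class, and for every (nonempty) $Y$ in this class there exists a uniformly continuous surjection $f\colon B(\kappa)\to Y$ which is a quotient map of topological spaces.
   Context: A uniform space is non-archimedean if its uniformity has a base consisting of equivalence relations. All uniform spaces are Hausdorff. *)

theory Defs
  imports "HOL-Analysis.Analysis" "HOL-Library.Equipollence"
begin

definition uniformity_on :: "'a set \<Rightarrow> ('a \<times> 'a) set set \<Rightarrow> bool" where
  "uniformity_on X \<Phi> \<longleftrightarrow>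
     \<Phi> \<noteq> {} \<and>
     (\<forall>U\<in>\<Phi>. Id_on X \<subseteq> U \<and> U \<subseteq> X \<times> X) \<and>
     (\<forall>U V. U \<in> \<Phi> \<and> U \<subseteq> V \<and> V \<subseteq> X \<times> X \<longrightarrow> V \<in> \<Phi>) \<and>
     (\<forall>U\<in>\<Phi>. \<forall>V\<in>\<Phi>. U \<inter> V \<in> \<Phi>) \<and>
     (\<forall>U\<in>\<Phi>. converse U \<in> \<Phi>) \<and>
     (\<forall>U\<in>\<Phi>. \<exists>V\<in>\<Phi>. V O V \<subseteq> U)"

text \<open>All uniform spaces are assumed Hausdorff (separated).\<close>
definition uniform_space_on :: "'a set \<Rightarrow> ('a \<times> 'a) set set \<Rightarrow> bool" where
  "uniform_space_on X \<Phi> \<longleftrightarrow> uniformity_on X \<Phi> \<and> \<Inter>\<Phi> = Id_on X"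

definition non_archimedean :: "'a set \<Rightarrow> ('a \<times> 'a) set set \<Rightarrow> bool" where
  "non_archimedean X \<Phi> \<longleftrightarrow> (\<forall>U\<in>\<Phi>. \<exists>V\<in>\<Phi>. equiv X V \<and> V \<subseteq> U)"

definition utopology :: "'a set \<Rightarrow> ('a \<times> 'a) set set \<Rightarrow> 'a topology" where
  "utopology X \<Phi> = topology (\<lambda>S. S \<subseteq> X \<and> (\<forall>x\<in>S. \<exists>U\<in>\<Phi>. {y. (x, y) \<in> U} \<subseteq> S))"

definition metric_uniformity :: "'a set \<Rightarrow> ('a \<Rightarrow> 'a \<Rightarrow> real) \<Rightarrow> ('a \<times> 'a) set set" where
  "metric_uniformity M d =
     {U. U \<subseteq> M \<times> M \<and> (\<exists>\<epsilon>>0. {(x, y). x \<in> M \<and> y \<in> M \<and> d x y < \<epsilon>} \<subseteq> U)}"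

definition complete_metric_uniformity :: "'a set \<Rightarrow> ('a \<times> 'a) set set \<Rightarrow> bool" where
  "complete_metric_uniformity X \<Phi> \<longleftrightarrow>
     (\<exists>d. Metric_space X d \<and> Metric_space.mcomplete X d \<and> \<Phi> = metric_uniformity X d)"

definition open_base_of :: "'a topology \<Rightarrow> 'a set set \<Rightarrow> bool" where
  "open_base_of T \<B> \<longleftrightarrow> (\<forall>B\<in>\<B>. openin T B) \<and>
     (\<forall>S. openin T S \<longrightarrow> (\<exists>\<C>\<subseteq>\<B>. \<Union>\<C> = S))"

definition weight_le :: "'a topology \<Rightarrow> 'k set \<Rightarrow> bool" where
  "weight_le T K \<longleftrightarrow> (\<exists>\<B>. open_base_of T \<B> \<and> \<B> \<lesssim> K)"

definition NA_cm_class :: "'k set \<Rightarrow> 'a set \<Rightarrow> ('a \<times> 'a) set set \<Rightarrow> bool" where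
  "NA_cm_class K X \<Phi> \<longleftrightarrow> uniform_space_on X \<Phi> \<and> non_archimedean X \<Phi> \<and>
     complete_metric_uniformity X \<Phi> \<and> weight_le (utopology X \<Phi>) K"

definition uniformly_continuous_on_u ::
  "'a set \<Rightarrow> ('a \<times> 'a) set set \<Rightarrow> 'b set \<Rightarrow> ('b \<times> 'b) set set \<Rightarrow> ('a \<Rightarrow> 'b) \<Rightarrow> bool" where
  "uniformly_continuous_on_u X \<Phi> Y \<Psi> f \<longleftrightarrow> f ` X \<subseteq> Y \<and>
     (\<forall>V\<in>\<Psi>. \<exists>U\<in>\<Phi>. \<forall>(x, y)\<in>U. (f x, f y) \<in> V)"

definition discrete_uniformity :: "'k set \<Rightarrow> ('k \<times> 'k) set set" where
  "discrete_uniformity K = {U. Id_on K \<subseteq> U \<and> U \<subseteq> K \<times> K}"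

definition power_carrier :: "'k set \<Rightarrow> (nat \<Rightarrow> 'k) set" where
  "power_carrier K = {f. \<forall>n. f n \<in> K}"

definition power_uniformity :: "'k set \<Rightarrow> ('k \<times> 'k) set set \<Rightarrow> ((nat \<Rightarrow> 'k) \<times> (nat \<Rightarrow> 'k)) set set" where
  "power_uniformity K \<Phi> =
     {U. U \<subseteq> power_carrier K \<times> power_carrier K \<and>
         (\<exists>F V. finite F \<and> (\<forall>i\<in>F. V i \<in> \<Phi>) \<and>
            {(f, g). f \<in> power_carrier K \<and> g \<in> power_carrier K \<and> (\<forall>i\<in>F. (f i, g i) \<in> V i)} \<subseteq> U)}"

abbreviation B_carrier :: "'k set \<Rightarrow> (nat \<Rightarrow> 'k) set" where
  "B_carrier K \<equiv> power_carrier K"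

abbreviation B_uniformity :: "'k set \<Rightarrow> ((nat \<Rightarrow> 'k) \<times> (nat \<Rightarrow> 'k)) set set" where
  "B_uniformity K \<equiv> power_uniformity K (discrete_uniformity K)"

end

theory Submission
  imports Defs
begin

text \<open>On \<open>B(K)\<close> the relations ``agree on the first \<open>n + 1\<close> coordinates'' form a base of
  equivalence entourages; they are the balls of the complete Baire metric, and the cylinders they
  cut out form an open base indexed by the finite lists over \<open>K\<close>, of which there are \<open>|K|\<close>.

  On the target \<open>Y\<close>, non-archimedean completeness gives a decreasing base of equivalence
  entourages \<open>E n \<subseteq> {d < (1/2)^n}\<close> along which every \<open>E\<close>-chain converges, and weight \<open>\<le> |K|\<close>
  gives labels \<open>a k\<close>, \<open>k \<in> K\<close>, meeting every \<open>E n\<close>-class. A sequence \<open>x \<in> B(K)\<close> is decoded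
  by walking along the labels \<open>a (x n)\<close>, accepting a label only if it is \<open>E n\<close>-equivalent to the
  current point, and taking the limit. The \<open>E n\<close>-class of the result depends only on
  \<open>x 0, \<dots>, x n\<close>, which gives uniform continuity; conversely, every point of that class is the
  decoding of a sequence agreeing with \<open>x\<close> up to \<open>n\<close> (continue with labels of the point),
  which makes the map surjective and open on saturated sets, i.e. a quotient map.\<close>

section \<open>Uniform spaces\<close>

lemma uniformity_on_Int: "uniformity_on X \<Phi> \<Longrightarrow> U \<in> \<Phi> \<Longrightarrow> V \<in> \<Phi> \<Longrightarrow> U \<inter> V \<in> \<Phi>"
  unfolding uniformity_on_def by blast

lemma uniformity_on_nonempty: "uniformity_on X \<Phi> \<Longrightarrow> \<Phi> \<noteq> {}"
  unfolding uniformity_on_def by (elim conjE)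

lemma uniformity_on_subset: "uniformity_on X \<Phi> \<Longrightarrow> U \<in> \<Phi> \<Longrightarrow> U \<subseteq> X \<times> X"
  unfolding uniformity_on_def by blast

lemma istopology_utopology:
  assumes "uniformity_on X \<Phi>"
  shows "istopology (\<lambda>S. S \<subseteq> X \<and> (\<forall>x\<in>S. \<exists>U\<in>\<Phi>. {y. (x, y) \<in> U} \<subseteq> S))"
  unfolding istopology_def
proof (rule conjI; intro allI impI)
  fix S T
  assume S: "S \<subseteq> X \<and> (\<forall>x\<in>S. \<exists>U\<in>\<Phi>. {y. (x, y) \<in> U} \<subseteq> S)"
    and T: "T \<subseteq> X \<and> (\<forall>x\<in>T. \<exists>U\<in>\<Phi>. {y. (x, y) \<in> U} \<subseteq> T)"
  have "\<exists>W\<in>\<Phi>. {y. (x, y) \<in> W} \<subseteq> S \<inter> T" if "x \<in> S \<inter> T" for x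
  proof -
    obtain U V where "U \<in> \<Phi>" "{y. (x, y) \<in> U} \<subseteq> S" "V \<in> \<Phi>" "{y. (x, y) \<in> V} \<subseteq> T"
      using S T \<open>x \<in> S \<inter> T\<close> by blast
    moreover have "U \<inter> V \<in> \<Phi>"
      using uniformity_on_Int[OF assms] calculation by blast
    ultimately show ?thesis
      by blast
  qed
  then show "S \<inter> T \<subseteq> X \<and> (\<forall>x\<in>S \<inter> T. \<exists>U\<in>\<Phi>. {y. (x, y) \<in> U} \<subseteq> S \<inter> T)"
    using S by blast
next
  fix \<K> assume \<K>: "\<forall>S\<in>\<K>. S \<subseteq> X \<and> (\<forall>x\<in>S. \<exists>U\<in>\<Phi>. {y. (x, y) \<in> U} \<subseteq> S)"
  have "\<exists>U\<in>\<Phi>. {y. (x, y) \<in> U} \<subseteq> \<Union>\<K>" if "x \<in> S" "S \<in> \<K>" for x S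
    using \<K> that by (meson Union_upper order_trans)
  with \<K> show "\<Union>\<K> \<subseteq> X \<and> (\<forall>x\<in>\<Union>\<K>. \<exists>U\<in>\<Phi>. {y. (x, y) \<in> U} \<subseteq> \<Union>\<K>)"
    by blast
qed


lemma openin_utopology:
  assumes "uniformity_on X \<Phi>"
  shows "openin (utopology X \<Phi>) S \<longleftrightarrow> S \<subseteq> X \<and> (\<forall>x\<in>S. \<exists>U\<in>\<Phi>. {y. (x, y) \<in> U} \<subseteq> S)"
  unfolding utopology_def topology_inverse'[OF istopology_utopology[OF assms]] ..

lemma topspace_utopology:
  assumes "uniformity_on X \<Phi>"
  shows "topspace (utopology X \<Phi>) = X"
proof -
  obtain U where "U \<in> \<Phi>" "U \<subseteq> X \<times> X"
    using uniformity_on_nonempty[OF assms] uniformity_on_subset[OF assms] by blast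
  then have "openin (utopology X \<Phi>) X"
    unfolding openin_utopology[OF assms] by auto
  moreover have "topspace (utopology X \<Phi>) \<subseteq> X"
    using openin_topspace[of "utopology X \<Phi>"] unfolding openin_utopology[OF assms] by (rule conjunct1)
  ultimately show ?thesis
    using openin_subset by blast
qed

section \<open>The countable power of a discrete space\<close>

definition agree_upto :: "'k set \<Rightarrow> nat \<Rightarrow> ((nat \<Rightarrow> 'k) \<times> (nat \<Rightarrow> 'k)) set" where
  "agree_upto K n = {(f, g). f \<in> power_carrier K \<and> g \<in> power_carrier K \<and> (\<forall>i\<le>n. f i = g i)}"

lemma agree_upto_antimono: "m \<le> n \<Longrightarrow> agree_upto K n \<subseteq> agree_upto K m"
  unfolding agree_upto_def by auto

lemma equiv_agree_upto: "equiv (B_carrier K) (agree_upto K n)"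
  unfolding agree_upto_def equiv_def refl_on_def sym_def trans_def by auto

lemma B_uniformity_eq:
  "B_uniformity K = {U. U \<subseteq> B_carrier K \<times> B_carrier K \<and> (\<exists>n. agree_upto K n \<subseteq> U)}"
proof (intro set_eqI iffI)
  fix U assume "U \<in> B_uniformity K"
  then obtain F V where U: "U \<subseteq> B_carrier K \<times> B_carrier K" "finite F"
     "\<forall>i\<in>F. V i \<in> discrete_uniformity K"
     "{(f, g). f \<in> B_carrier K \<and> g \<in> B_carrier K \<and> (\<forall>i\<in>F. (f i, g i) \<in> V i)} \<subseteq> U"
    unfolding power_uniformity_def by blast
  obtain n where n: "F \<subseteq> {..<n}"
    using finite_nat_bounded U(2) by blast
  have "agree_upto K n \<subseteq> U"
  proof
    fix p assume "p \<in> agree_upto K n"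
    then obtain f g where p: "p = (f, g)" "f \<in> B_carrier K" "g \<in> B_carrier K" "\<forall>i\<le>n. f i = g i"
      unfolding agree_upto_def by blast
    have "(f i, g i) \<in> V i" if "i \<in> F" for i
    proof -
      have "f i = g i" "f i \<in> K"
        using n p that unfolding power_carrier_def by auto
      then show ?thesis
        using U(3) that unfolding discrete_uniformity_def by auto
    qed
    then show "p \<in> U"
      using U(4) p by blast
  qed
  then show "U \<in> {U. U \<subseteq> B_carrier K \<times> B_carrier K \<and> (\<exists>n. agree_upto K n \<subseteq> U)}"
    using U(1) by blast
next
  fix U assume "U \<in> {U. U \<subseteq> B_carrier K \<times> B_carrier K \<and> (\<exists>n. agree_upto K n \<subseteq> U)}"
  then obtain n where U: "U \<subseteq> B_carrier K \<times> B_carrier K" "agree_upto K n \<subseteq> U"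
    by blast
  have "{(f, g). f \<in> B_carrier K \<and> g \<in> B_carrier K \<and> (\<forall>i\<in>{..n}. (f i, g i) \<in> Id_on K)} \<subseteq> U"
    using U(2) unfolding agree_upto_def by (force simp: Id_on_def)
  then show "U \<in> B_uniformity K"
    unfolding power_uniformity_def discrete_uniformity_def using U(1)
    by (intro CollectI conjI exI[of _ "{..n}"] exI[of _ "\<lambda>_. Id_on K"]) auto
qed

lemma agree_upto_in_B_uniformity: "agree_upto K n \<in> B_uniformity K"
  unfolding B_uniformity_eq agree_upto_def by blast

lemma B_uniformity_on: "uniformity_on (B_carrier K) (B_uniformity K)"
  unfolding uniformity_on_def
proof (intro conjI ballI allI impI)
  fix U V assume U: "U \<in> B_uniformity K" and V: "V \<in> B_uniformity K"
  obtain n m where "agree_upto K n \<subseteq> U" "agree_upto K m \<subseteq> V"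
    using U V unfolding B_uniformity_eq by blast
  then have "agree_upto K (max n m) \<subseteq> U \<inter> V"
    using agree_upto_antimono[of n "max n m" K] agree_upto_antimono[of m "max n m" K] by auto
  then show "U \<inter> V \<in> B_uniformity K"
    using U unfolding B_uniformity_eq by blast
next
  fix U assume "U \<in> B_uniformity K"
  then obtain n where U: "U \<subseteq> B_carrier K \<times> B_carrier K" "agree_upto K n \<subseteq> U"
    unfolding B_uniformity_eq by blast
  then show "Id_on (B_carrier K) \<subseteq> U" "U \<subseteq> B_carrier K \<times> B_carrier K"
    unfolding agree_upto_def by auto
  have "agree_upto K n \<subseteq> converse U"
    using U(2) unfolding agree_upto_def by auto
  with U(1) show "converse U \<in> B_uniformity K"
    unfolding B_uniformity_eq by blast
  have "agree_upto K n O agree_upto K n \<subseteq> U"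
    using U(2) unfolding agree_upto_def by auto
  then show "\<exists>V\<in>B_uniformity K. V O V \<subseteq> U"
    using agree_upto_in_B_uniformity by blast
next
  show "B_uniformity K \<noteq> {}"
    using agree_upto_in_B_uniformity by blast
next
  fix U V assume "U \<in> B_uniformity K \<and> U \<subseteq> V \<and> V \<subseteq> B_carrier K \<times> B_carrier K"
  then show "V \<in> B_uniformity K"
    unfolding B_uniformity_eq by blast
qed

lemma Inter_B_uniformity: "\<Inter>(B_uniformity K) = Id_on (B_carrier K)"
proof
  show "\<Inter>(B_uniformity K) \<subseteq> Id_on (B_carrier K)"
  proof
    fix p assume "p \<in> \<Inter>(B_uniformity K)"
    then have "\<forall>n. p \<in> agree_upto K n"
      using agree_upto_in_B_uniformity by blast
    then obtain f g where "p = (f, g)" "f \<in> B_carrier K" "\<And>n i. i \<le> n \<Longrightarrow> f i = g i"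
      unfolding agree_upto_def by blast
    moreover have "f = g"
      using calculation(3) by (intro ext) blast
    ultimately show "p \<in> Id_on (B_carrier K)"
      by blast
  qed
  show "Id_on (B_carrier K) \<subseteq> \<Inter>(B_uniformity K)"
    unfolding B_uniformity_eq agree_upto_def by blast
qed

lemma non_archimedean_B: "non_archimedean (B_carrier K) (B_uniformity K)"
  unfolding non_archimedean_def
proof
  fix U assume "U \<in> B_uniformity K"
  then obtain n where "agree_upto K n \<subseteq> U"
    unfolding B_uniformity_eq by blast
  then show "\<exists>V\<in>B_uniformity K. equiv (B_carrier K) V \<and> V \<subseteq> U"
    using agree_upto_in_B_uniformity equiv_agree_upto by blast
qed

definition baire_dist :: "(nat \<Rightarrow> 'k) \<Rightarrow> (nat \<Rightarrow> 'k) \<Rightarrow> real" where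
  "baire_dist f g = (if f = g then 0 else (1/2) ^ (LEAST i. f i \<noteq> g i))"

lemma baire_dist_less_iff: "baire_dist f g < (1/2)^n \<longleftrightarrow> (\<forall>i\<le>n. f i = g i)"
proof (cases "f = g")
  case False
  then obtain j where "f j \<noteq> g j"
    by (auto simp: fun_eq_iff)
  define m where "m = (LEAST i. f i \<noteq> g i)"
  have "f m \<noteq> g m"
    unfolding m_def by (rule LeastI) fact
  moreover have "\<And>i. i < m \<Longrightarrow> f i = g i"
    unfolding m_def using not_less_Least by blast
  moreover have "baire_dist f g < (1/2)^n \<longleftrightarrow> n < m"
    using False by (simp add: baire_dist_def m_def)
  ultimately show ?thesis
    by (metis le_less_trans linorder_not_le)
qed (simp add: baire_dist_def)

lemma baire_dist_triangle: "baire_dist f h \<le> baire_dist f g + baire_dist g h"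
proof (cases "f = h \<or> f = g \<or> g = h")
  case False
  define m1 where "m1 = (LEAST i. f i \<noteq> g i)"
  define m2 where "m2 = (LEAST i. g i \<noteq> h i)"
  define m where "m = (LEAST i. f i \<noteq> h i)"
  obtain j where "f j \<noteq> h j"
    using False by (auto simp: fun_eq_iff)
  then have "f m \<noteq> h m"
    unfolding m_def by (rule LeastI)
  have "min m1 m2 \<le> m"
  proof (rule ccontr)
    assume "\<not> min m1 m2 \<le> m"
    then have "m < m1" "m < m2"
      by auto
    then have "f m = g m" "g m = h m"
      unfolding m1_def m2_def using not_less_Least by blast+
    with \<open>f m \<noteq> h m\<close> show False
      by simp
  qed
  then have "(1/2::real)^m \<le> (1/2)^(min m1 m2)"
    by (rule power_decreasing) auto
  also have "\<dots> \<le> (1/2)^m1 + (1/2)^m2"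
    by (cases "m1 \<le> m2") (auto simp: min_def)
  finally show ?thesis
    using False by (simp add: baire_dist_def m_def m1_def m2_def)
qed (auto simp: baire_dist_def)

lemma Metric_space_baire_dist: "Metric_space (B_carrier K) baire_dist"
proof
  fix x y z :: "nat \<Rightarrow> 'a"
  show "0 \<le> baire_dist x y" "baire_dist x y = 0 \<longleftrightarrow> x = y"
    by (simp_all add: baire_dist_def)
  show "baire_dist x y = baire_dist y x"
    unfolding baire_dist_def by (simp add: eq_commute)
  show "baire_dist x z \<le> baire_dist x y + baire_dist y z"
    by (rule baire_dist_triangle)
qed

definition metric_entourage :: "'a set \<Rightarrow> ('a \<Rightarrow> 'a \<Rightarrow> real) \<Rightarrow> real \<Rightarrow> ('a \<times> 'a) set" where
  "metric_entourage M d r = {(x, y). x \<in> M \<and> y \<in> M \<and> d x y < r}"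

lemma metric_uniformity_iff:
  "U \<in> metric_uniformity M d \<longleftrightarrow> U \<subseteq> M \<times> M \<and> (\<exists>r>0. metric_entourage M d r \<subseteq> U)"
  unfolding metric_uniformity_def metric_entourage_def by blast

lemma metric_entourage_baire_dist:
  "metric_entourage (B_carrier K) baire_dist ((1/2)^n) = agree_upto K n"
  unfolding metric_entourage_def agree_upto_def baire_dist_less_iff by blast

lemma metric_uniformity_baire_dist: "metric_uniformity (B_carrier K) baire_dist = B_uniformity K"
proof (intro set_eqI iffI)
  fix U assume "U \<in> metric_uniformity (B_carrier K) baire_dist"
  then obtain r where U: "U \<subseteq> B_carrier K \<times> B_carrier K" "r > 0"
    "metric_entourage (B_carrier K) baire_dist r \<subseteq> U"
    unfolding metric_uniformity_iff by blast
  obtain n where "(1/2::real)^n < r"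
    using real_arch_pow_inv[OF U(2), of "1/2"] by auto
  then have "agree_upto K n \<subseteq> U"
    using U(3) unfolding metric_entourage_baire_dist[symmetric] metric_entourage_def by auto
  with U(1) show "U \<in> B_uniformity K"
    unfolding B_uniformity_eq by blast
next
  fix U assume "U \<in> B_uniformity K"
  then obtain n where "U \<subseteq> B_carrier K \<times> B_carrier K" "agree_upto K n \<subseteq> U"
    unfolding B_uniformity_eq by blast
  then show "U \<in> metric_uniformity (B_carrier K) baire_dist"
    unfolding metric_uniformity_iff metric_entourage_baire_dist[symmetric]
    by (intro conjI exI[of _ "(1/2)^n"]) auto
qed

text \<open>The limit of a Cauchy sequence takes at coordinate \<open>i\<close> the value on which the sequence
  stabilises from index \<open>N i\<close> onwards.\<close>
lemma mcomplete_baire_dist: "Metric_space.mcomplete (B_carrier K) baire_dist"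
proof -
  interpret M: Metric_space "B_carrier K" baire_dist
    by (rule Metric_space_baire_dist)
  show ?thesis
    unfolding M.mcomplete_def
  proof (intro allI impI)
    fix \<sigma> assume Cauchy: "M.MCauchy \<sigma>"
    then have range: "range \<sigma> \<subseteq> B_carrier K"
      unfolding M.MCauchy_def by blast
    have "\<forall>i. \<exists>N. \<forall>n n'. N \<le> n \<longrightarrow> N \<le> n' \<longrightarrow> baire_dist (\<sigma> n) (\<sigma> n') < (1/2)^i"
      using Cauchy unfolding M.MCauchy_def by simp
    then obtain N where N: "\<And>i n n'. N i \<le> n \<Longrightarrow> N i \<le> n' \<Longrightarrow> baire_dist (\<sigma> n) (\<sigma> n') < (1/2)^i"
      by metis
    define L where "L i = \<sigma> (N i) i" for i
    have L: "L \<in> B_carrier K"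
      using range unfolding L_def power_carrier_def by auto
    have "limitin M.mtopology \<sigma> L sequentially"
      unfolding M.limitin_metric
    proof (intro conjI allI impI L)
      fix r :: real assume "r > 0"
      obtain n where n: "(1/2::real)^n < r"
        using real_arch_pow_inv[OF \<open>r > 0\<close>, of "1/2"] by auto
      have "baire_dist (\<sigma> j) L < r" if j: "Max (N ` {..n}) \<le> j" for j
      proof -
        have "\<sigma> j i = L i" if "i \<le> n" for i
        proof -
          have "N i \<le> j"
            using j that by (meson Max_ge atMost_iff finite_atMost finite_imageI image_eqI order_trans)
          then have "baire_dist (\<sigma> j) (\<sigma> (N i)) < (1/2)^i"
            by (intro N) auto
          then show ?thesis
            unfolding baire_dist_less_iff L_def by auto
        qed
        then show ?thesis
          using n baire_dist_less_iff[of "\<sigma> j" L n] by auto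
      qed
      then show "\<forall>\<^sub>F j in sequentially. \<sigma> j \<in> B_carrier K \<and> baire_dist (\<sigma> j) L < r"
        using range unfolding eventually_sequentially by blast
    qed
    then show "\<exists>x. limitin M.mtopology \<sigma> x sequentially"
      by blast
  qed
qed

fun list_encode :: "('k \<times> 'k \<Rightarrow> 'k) \<Rightarrow> 'k \<Rightarrow> 'k list \<Rightarrow> 'k" where
  "list_encode p k0 [] = k0"
| "list_encode p k0 (k # l) = p (k, list_encode p k0 l)"

lemma list_encode_in: "p ` (K \<times> K) \<subseteq> K \<Longrightarrow> k0 \<in> K \<Longrightarrow> l \<in> lists K \<Longrightarrow> list_encode p k0 l \<in> K"
  by (induction l) auto

lemma list_encode_inj:
  assumes "inj_on p (K \<times> K)" "p ` (K \<times> K) \<subseteq> K" "k0 \<in> K"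
  shows "l \<in> lists K \<Longrightarrow> l' \<in> lists K \<Longrightarrow> length l = length l'
    \<Longrightarrow> list_encode p k0 l = list_encode p k0 l' \<Longrightarrow> l = l'"
proof (induction l arbitrary: l')
  case (Cons k l)
  then obtain k' m where l': "l' = k' # m"
    by (cases l') auto
  have "(k, list_encode p k0 l) \<in> K \<times> K" "(k', list_encode p k0 m) \<in> K \<times> K"
    using Cons.prems l' list_encode_in[OF assms(2,3)] by auto
  moreover have "p (k, list_encode p k0 l) = p (k', list_encode p k0 m)"
    using Cons.prems l' by simp
  ultimately have "k = k'" "list_encode p k0 l = list_encode p k0 m"
    using assms(1) unfolding inj_on_def by blast+
  then show ?case
    using Cons l' by auto
qed simp

text \<open>Iterating a pairing \<open>K \<times> K \<rightarrow> K\<close> encodes a list of fixed length; the length is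
  recorded separately, and \<open>\<nat> \<times> K \<lesssim> K \<times> K \<lesssim> K\<close>.\<close>
lemma lists_lepoll_infinite:
  assumes "infinite K"
  shows "lists K \<lesssim> K"
proof -
  obtain p where p: "inj_on p (K \<times> K)" "p ` (K \<times> K) \<subseteq> K"
    using card_of_ordLeq[of "K \<times> K" K] card_of_Times_same_infinite[OF assms] ordIso_iff_ordLeq
    by blast
  obtain k0 where k0: "k0 \<in> K"
    using assms by (metis finite.emptyI ex_in_conv)
  have "inj_on (\<lambda>l. (length l, list_encode p k0 l)) (lists K)"
    by (rule inj_onI) (use list_encode_inj[OF p k0] in auto)
  moreover have "(\<lambda>l. (length l, list_encode p k0 l)) ` lists K \<subseteq> (UNIV :: nat set) \<times> K"
    using list_encode_in[OF p(2) k0] by auto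
  ultimately have "lists K \<lesssim> (UNIV :: nat set) \<times> K"
    unfolding lepoll_def by blast
  also have "(UNIV :: nat set) \<times> K \<lesssim> K \<times> K"
    using times_lepoll_mono[OF iffD1[OF infinite_le_lepoll assms] lepoll_refl] .
  also have "K \<times> K \<lesssim> K"
    unfolding lepoll_def using p by blast
  finally show ?thesis .
qed

definition cylinder :: "'k set \<Rightarrow> 'k list \<Rightarrow> (nat \<Rightarrow> 'k) set" where
  "cylinder K l = {g \<in> B_carrier K. \<forall>i<length l. g i = l ! i}"

lemma open_base_cylinders: "open_base_of (utopology (B_carrier K) (B_uniformity K)) (cylinder K ` lists K)"
  unfolding open_base_of_def openin_utopology[OF B_uniformity_on]
proof (rule conjI; intro ballI allI impI)
  fix S assume "S \<in> cylinder K ` lists K"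
  then obtain l where S: "S = cylinder K l"
    by blast
  have "{y. (x, y) \<in> agree_upto K (length l)} \<subseteq> S" if "x \<in> S" for x
    using that unfolding S cylinder_def agree_upto_def by auto
  then show "S \<subseteq> B_carrier K \<and> (\<forall>x\<in>S. \<exists>U\<in>B_uniformity K. {y. (x, y) \<in> U} \<subseteq> S)"
    using agree_upto_in_B_uniformity S unfolding cylinder_def by blast
next
  fix S assume S: "S \<subseteq> B_carrier K \<and> (\<forall>x\<in>S. \<exists>U\<in>B_uniformity K. {y. (x, y) \<in> U} \<subseteq> S)"
  have "x \<in> \<Union>{C \<in> cylinder K ` lists K. C \<subseteq> S}" if x: "x \<in> S" for x
  proof -
    obtain U where U: "U \<in> B_uniformity K" "{y. (x, y) \<in> U} \<subseteq> S"
      using S x by blast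
    then obtain n where n: "agree_upto K n \<subseteq> U"
      unfolding B_uniformity_eq by blast
    define l where "l = map x [0..<Suc n]"
    have xK: "x \<in> B_carrier K"
      using x S by blast
    then have l: "l \<in> lists K"
      unfolding l_def power_carrier_def by auto
    have "cylinder K l \<subseteq> {y. (x, y) \<in> agree_upto K n}"
      using xK unfolding cylinder_def agree_upto_def l_def by (auto simp del: upt_Suc)
    then have "cylinder K l \<subseteq> S"
      using n U(2) by blast
    moreover have "x \<in> cylinder K l"
      using xK unfolding cylinder_def l_def by (auto simp del: upt_Suc)
    ultimately show ?thesis
      using l by blast
  qed
  then show "\<exists>\<C>\<subseteq>cylinder K ` lists K. \<Union>\<C> = S"
    by (intro exI[of _ "{C \<in> cylinder K ` lists K. C \<subseteq> S}"]) blast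
qed

lemma weight_le_B:
  assumes "infinite K"
  shows "weight_le (utopology (B_carrier K) (B_uniformity K)) K"
  unfolding weight_le_def
  using open_base_cylinders lepoll_trans[OF image_lepoll lists_lepoll_infinite[OF assms]] by blast

lemma B_in_NA_cm_class:
  assumes "infinite K"
  shows "NA_cm_class K (B_carrier K) (B_uniformity K)"
  unfolding NA_cm_class_def uniform_space_on_def complete_metric_uniformity_def
  by (intro conjI exI[of _ baire_dist] B_uniformity_on Inter_B_uniformity non_archimedean_B
      weight_le_B[OF assms] Metric_space_baire_dist mcomplete_baire_dist
      metric_uniformity_baire_dist[symmetric])

section \<open>Non-archimedean complete metric spaces\<close>

lemma weight_le_dense_map:
  assumes "weight_le T K" "topspace T \<noteq> {}"
  obtains a where "a ` K \<subseteq> topspace T" "\<And>S. openin T S \<Longrightarrow> S \<noteq> {} \<Longrightarrow> \<exists>k\<in>K. a k \<in> S"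
proof -
  obtain \<B> g where base: "open_base_of T \<B>" and g: "\<B> \<subseteq> g ` K"
    using assms(1) unfolding weight_le_def lepoll_iff by blast
  obtain y0 where y0: "y0 \<in> topspace T"
    using assms(2) by blast
  define a where "a k = (if g k \<inter> topspace T = {} then y0 else SOME y. y \<in> g k \<inter> topspace T)" for k
  have a_in: "a k \<in> g k \<inter> topspace T" if "g k \<inter> topspace T \<noteq> {}" for k
    using that some_in_eq[of "g k \<inter> topspace T"] unfolding a_def by presburger
  have "a ` K \<subseteq> topspace T"
    using y0 a_in unfolding a_def by (auto split: if_splits)
  moreover have "\<exists>k\<in>K. a k \<in> S" if S: "openin T S" "S \<noteq> {}" for S
  proof -
    obtain \<C> where "\<C> \<subseteq> \<B>" "\<Union>\<C> = S"
      using base S(1) unfolding open_base_of_def by blast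
    then obtain B where B: "B \<in> \<B>" "B \<noteq> {}" "B \<subseteq> S"
      using S(2) by blast
    then obtain k where k: "k \<in> K" "B = g k"
      using g by blast
    have "B \<subseteq> topspace T"
      using B(1) base openin_subset unfolding open_base_of_def by blast
    then have "a k \<in> B"
      using a_in[of k] B(2) k(2) by blast
    then show ?thesis
      using k(1) B(3) by blast
  qed
  ultimately show ?thesis
    using that by blast
qed

locale equiv_chain =
  fixes Y :: "'a set" and E :: "nat \<Rightarrow> ('a \<times> 'a) set"
  assumes equiv_E: "equiv Y (E n)"
    and E_Suc_subset: "E (Suc n) \<subseteq> E n"
begin

lemma E_refl: "x \<in> Y \<Longrightarrow> (x, x) \<in> E n"
  using equiv_E[of n] by (auto elim: equivE dest: refl_onD)

lemma E_sym: "(x, y) \<in> E n \<Longrightarrow> (y, x) \<in> E n"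
  using equiv_E[of n] by (auto elim: equivE dest: symD)

lemma E_trans: "(x, y) \<in> E n \<Longrightarrow> (y, z) \<in> E n \<Longrightarrow> (x, z) \<in> E n"
  using equiv_E[of n] by (auto elim: equivE dest: transD)

lemma E_subset: "E n \<subseteq> Y \<times> Y"
  using equiv_E[of n] by (auto elim: equivE)

lemma E_antimono: "m \<le> n \<Longrightarrow> E n \<subseteq> E m"
  using lift_Suc_antimono_le[of E, OF E_Suc_subset] by blast

lemma chain_rel_le:
  assumes "\<And>n. (p n, p (Suc n)) \<in> E n" and "n \<le> m"
  shows "(p n, p m) \<in> E n"
  using \<open>n \<le> m\<close>
proof (induction m rule: dec_induct)
  case base
  show ?case
    using assms(1)[of n] E_subset E_refl by blast
next
  case (step m)
  then show ?case
    using assms(1)[of m] E_antimono[of n m] E_trans by blast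
qed

lemma chain_limit_if_mcomplete:
  assumes "Metric_space Y d" "Metric_space.mcomplete Y d"
    and small: "\<And>n. E n \<subseteq> metric_entourage Y d ((1/2)^n)"
    and entourage: "\<And>n. E n \<in> metric_uniformity Y d"
    and chain: "\<And>n. (p n, p (Suc n)) \<in> E n"
  shows "\<exists>z\<in>Y. \<forall>n. (p n, z) \<in> E n"
proof -
  interpret M: Metric_space Y d
    by fact
  have "M.MCauchy p"
    unfolding M.MCauchy_def
  proof (intro conjI allI impI)
    show "range p \<subseteq> Y"
      using chain E_subset by blast
    fix r :: real assume "r > 0"
    obtain N where N: "(1/2::real)^N < r"
      using real_arch_pow_inv[OF \<open>r > 0\<close>, of "1/2"] by auto
    have "d (p n) (p n') < r" if "N \<le> n" "N \<le> n'" for n n'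
    proof -
      have "(p n, p n') \<in> E N"
        using chain_rel_le[OF chain that(1)] chain_rel_le[OF chain that(2)] E_sym E_trans by blast
      then show ?thesis
        using small[of N] N unfolding metric_entourage_def by auto
    qed
    then show "\<exists>N. \<forall>n n'. N \<le> n \<longrightarrow> N \<le> n' \<longrightarrow> d (p n) (p n') < r"
      by blast
  qed
  then obtain z where "limitin M.mtopology p z sequentially"
    using assms(2) unfolding M.mcomplete_def by blast
  then have z: "z \<in> Y" "\<And>r. r > 0 \<Longrightarrow> \<forall>\<^sub>F j in sequentially. p j \<in> Y \<and> d (p j) z < r"
    unfolding M.limitin_metric by blast+
  have "(p n, z) \<in> E n" for n
  proof -
    obtain r where r: "r > 0" "metric_entourage Y d r \<subseteq> E n"
      using entourage[of n] unfolding metric_uniformity_iff by blast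
    obtain N where N: "\<And>j. N \<le> j \<Longrightarrow> p j \<in> Y \<and> d (p j) z < r"
      using z(2)[OF r(1)] unfolding eventually_sequentially by blast
    have "(p (max n N), z) \<in> E n"
      using N[of "max n N"] z(1) r(2) unfolding metric_entourage_def by auto
    then show ?thesis
      using chain_rel_le[OF chain, of n "max n N"] E_trans by auto
  qed
  then show ?thesis
    using z(1) by blast
qed

end

lemma non_archimedean_metric_equiv_chain:
  assumes "uniformity_on Y \<Psi>" "non_archimedean Y \<Psi>" "\<Psi> = metric_uniformity Y d"
  obtains E where "equiv_chain Y E" "\<And>n. E n \<in> \<Psi>" "\<And>n. E n \<subseteq> metric_entourage Y d ((1/2)^n)"
proof -
  have entourage: "metric_entourage Y d r \<in> \<Psi>" if "r > 0" for r
    unfolding assms(3) metric_uniformity_iff using that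
    by (intro conjI exI[of _ r]) (auto simp: metric_entourage_def)
  have refine: "\<exists>V. V \<in> \<Psi> \<and> equiv Y V \<and> V \<subseteq> U" if "U \<in> \<Psi>" for U
    using assms(2) that unfolding non_archimedean_def by blast
  let ?P = "\<lambda>n V. V \<in> \<Psi> \<and> equiv Y V \<and> V \<subseteq> metric_entourage Y d ((1/2)^n)"
  have "\<exists>E. \<forall>n. ?P n (E n) \<and> E (Suc n) \<subseteq> E n"
  proof (rule dependent_nat_choice)
    show "\<exists>V. ?P 0 V"
      using refine[OF entourage[of 1]] by simp
    fix V n assume "?P n V"
    then have "V \<inter> metric_entourage Y d ((1/2)^Suc n) \<in> \<Psi>"
      using uniformity_on_Int[OF assms(1)] entourage by simp
    then show "\<exists>W. ?P (Suc n) W \<and> W \<subseteq> V"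
      using refine by blast
  qed
  then obtain E where "\<And>n. ?P n (E n)" "\<And>n. E (Suc n) \<subseteq> E n"
    by blast
  then show ?thesis
    using that equiv_chain.intro by blast
qed

locale complete_equiv_chain = equiv_chain +
  fixes \<Psi> :: "('a \<times> 'a) set set"
  assumes uniform_space: "uniform_space_on Y \<Psi>"
    and E_in: "E n \<in> \<Psi>"
    and E_base: "U \<in> \<Psi> \<Longrightarrow> \<exists>n. E n \<subseteq> U"
    and chain_converges: "(\<And>n. (p n, p (Suc n)) \<in> E n) \<Longrightarrow> \<exists>z\<in>Y. \<forall>n. (p n, z) \<in> E n"
begin

lemma uniformity: "uniformity_on Y \<Psi>"
  using uniform_space unfolding uniform_space_on_def by blast

lemma eq_if_E_all:
  assumes "\<And>n. (y, z) \<in> E n"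
  shows "y = z"
proof -
  have "(y, z) \<in> \<Inter>\<Psi>"
    using E_base assms by blast
  then show ?thesis
    using uniform_space unfolding uniform_space_on_def by auto
qed

lemma openin_E_class: "openin (utopology Y \<Psi>) {z. (y, z) \<in> E n}"
  unfolding openin_utopology[OF uniformity]
proof (intro conjI ballI)
  show "{z. (y, z) \<in> E n} \<subseteq> Y"
    using E_subset by blast
  fix z assume "z \<in> {z. (y, z) \<in> E n}"
  then have "{w. (z, w) \<in> E n} \<subseteq> {z. (y, z) \<in> E n}"
    using E_trans by blast
  then show "\<exists>U\<in>\<Psi>. {w. (z, w) \<in> U} \<subseteq> {z. (y, z) \<in> E n}"
    using E_in by blast
qed

lemma dense_labelling:
  assumes "weight_le (utopology Y \<Psi>) K" "Y \<noteq> {}"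
  obtains a where "a ` K \<subseteq> Y" "\<And>y n. y \<in> Y \<Longrightarrow> \<exists>k\<in>K. (y, a k) \<in> E n"
proof -
  obtain a where a: "a ` K \<subseteq> Y" "\<And>S. openin (utopology Y \<Psi>) S \<Longrightarrow> S \<noteq> {} \<Longrightarrow> \<exists>k\<in>K. a k \<in> S"
    using weight_le_dense_map[OF assms(1)] assms(2) unfolding topspace_utopology[OF uniformity] by blast
  have "\<exists>k\<in>K. (y, a k) \<in> E n" if "y \<in> Y" for y n
    using a(2)[OF openin_E_class, of y n] E_refl[OF that] by blast
  then show ?thesis
    using that a(1) by blast
qed

end

section \<open>Decoding sequences of labels\<close>

fun track :: "(nat \<Rightarrow> ('a \<times> 'a) set) \<Rightarrow> ('k \<Rightarrow> 'a) \<Rightarrow> (nat \<Rightarrow> 'k) \<Rightarrow> nat \<Rightarrow> 'a" where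
  "track E a x 0 = a (x 0)"
| "track E a x (Suc n) =
    (if (track E a x n, a (x (Suc n))) \<in> E n then a (x (Suc n)) else track E a x n)"

lemma track_cong: "(\<And>i. i \<le> n \<Longrightarrow> x i = x' i) \<Longrightarrow> track E a x n = track E a x' n"
  by (induction n) auto

locale labelled_equiv_chain = complete_equiv_chain +
  fixes K :: "'k set" and a :: "'k \<Rightarrow> 'a"
  assumes labels_in: "a ` K \<subseteq> Y"
    and labels_dense: "y \<in> Y \<Longrightarrow> \<exists>k\<in>K. (y, a k) \<in> E n"
begin

lemma track_in: "x \<in> B_carrier K \<Longrightarrow> track E a x n \<in> Y"
  using labels_in by (induction n) (auto simp: power_carrier_def)

lemma track_step: "x \<in> B_carrier K \<Longrightarrow> (track E a x n, track E a x (Suc n)) \<in> E n"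
  using E_refl[OF track_in] by auto

definition decode :: "(nat \<Rightarrow> 'k) \<Rightarrow> 'a" where
  "decode x = (SOME z. z \<in> Y \<and> (\<forall>n. (track E a x n, z) \<in> E n))"

lemma decode:
  assumes "x \<in> B_carrier K"
  shows "decode x \<in> Y" "(track E a x n, decode x) \<in> E n"
proof -
  have "\<exists>z. z \<in> Y \<and> (\<forall>n. (track E a x n, z) \<in> E n)"
    using chain_converges[OF track_step[OF assms]] by blast
  then have "decode x \<in> Y \<and> (\<forall>n. (track E a x n, decode x) \<in> E n)"
    unfolding decode_def by (rule someI_ex)
  then show "decode x \<in> Y" "(track E a x n, decode x) \<in> E n"
    by blast+
qed

lemma decode_agree_upto:
  assumes "(x, x') \<in> agree_upto K n"
  shows "(decode x, decode x') \<in> E n"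
proof -
  have x: "x \<in> B_carrier K" "x' \<in> B_carrier K" and "track E a x n = track E a x' n"
    using assms track_cong[of n x x'] unfolding agree_upto_def by auto
  then show ?thesis
    using decode(2)[OF x(1), of n] decode(2)[OF x(2), of n] E_sym E_trans by metis
qed

definition label :: "'a \<Rightarrow> nat \<Rightarrow> 'k" where
  "label y n = (SOME k. k \<in> K \<and> (y, a k) \<in> E n)"

lemma label:
  assumes "y \<in> Y"
  shows "label y n \<in> K \<and> (y, a (label y n)) \<in> E n"
proof -
  have "\<exists>k. k \<in> K \<and> (y, a k) \<in> E n"
    using labels_dense[OF assms] by blast
  then show ?thesis
    unfolding label_def by (rule someI_ex)
qed

lemma track_redirect:
  assumes "y \<in> Y" "(track E a x n, y) \<in> E n" "\<And>i. n < i \<Longrightarrow> x i = label y i" "n \<le> m"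
  shows "(track E a x m, y) \<in> E m"
  using \<open>n \<le> m\<close>
proof (induction m rule: dec_induct)
  case (step k)
  have close: "(y, a (x (Suc k))) \<in> E (Suc k)"
    using label[OF assms(1)] assms(3)[of "Suc k"] step(1) by simp
  then have "(track E a x k, a (x (Suc k))) \<in> E k"
    using step(3) E_Suc_subset E_trans by blast
  then show ?case
    using close E_sym by simp
qed (use assms(2) in simp)

lemma decode_hits:
  assumes x: "x \<in> B_carrier K" and y: "y \<in> Y" and "(track E a x n, y) \<in> E n"
  obtains x' where "(x, x') \<in> agree_upto K n" "decode x' = y"
proof -
  define x' where "x' i = (if i \<le> n then x i else label y i)" for i
  have x': "x' \<in> B_carrier K"
    using x label[OF y] unfolding x'_def power_carrier_def by auto
  have "track E a x' n = track E a x n"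
    unfolding x'_def by (rule track_cong) simp
  then have "(track E a x' m, y) \<in> E m" if "n \<le> m" for m
    using track_redirect[of y x' n m] assms that unfolding x'_def by auto
  then have "(y, decode x') \<in> E (n + m)" for m
    using decode(2)[OF x'] E_sym E_trans le_add1 by blast
  then have "decode x' = y"
    using E_antimono eq_if_E_all E_sym by (metis le_add2 subsetD)
  moreover have "(x, x') \<in> agree_upto K n"
    using x x' unfolding agree_upto_def x'_def by auto
  ultimately show ?thesis
    using that by blast
qed

lemma decode_image: "decode ` B_carrier K = Y"
proof
  show "decode ` B_carrier K \<subseteq> Y"
    using decode(1) by blast
  show "Y \<subseteq> decode ` B_carrier K"
  proof
    fix y assume y: "y \<in> Y"
    have x: "label y \<in> B_carrier K"
      using label[OF y] unfolding power_carrier_def by blast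
    have "(track E a (label y) 0, y) \<in> E 0"
      using label[OF y] E_sym by simp
    then show "y \<in> decode ` B_carrier K"
      using decode_hits[OF x y] unfolding agree_upto_def by blast
  qed
qed

lemma uniformly_continuous_decode:
  "uniformly_continuous_on_u (B_carrier K) (B_uniformity K) Y \<Psi> decode"
  unfolding uniformly_continuous_on_u_def
proof (intro conjI ballI)
  show "decode ` B_carrier K \<subseteq> Y"
    using decode_image by simp
  fix V assume "V \<in> \<Psi>"
  then obtain n where "E n \<subseteq> V"
    using E_base by blast
  then show "\<exists>U\<in>B_uniformity K. \<forall>(x, y)\<in>U. (decode x, decode y) \<in> V"
    using agree_upto_in_B_uniformity decode_agree_upto by blast
qed

lemma openin_preimage_decode:
  assumes "openin (utopology Y \<Psi>) S"
  shows "openin (utopology (B_carrier K) (B_uniformity K)) {x \<in> B_carrier K. decode x \<in> S}"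
  unfolding openin_utopology[OF B_uniformity_on]
proof (intro conjI ballI)
  fix x assume x: "x \<in> {x \<in> B_carrier K. decode x \<in> S}"
  then obtain V where V: "V \<in> \<Psi>" "{z. (decode x, z) \<in> V} \<subseteq> S"
    using assms unfolding openin_utopology[OF uniformity] by blast
  then obtain n where "E n \<subseteq> V"
    using E_base by blast
  then have "{x'. (x, x') \<in> agree_upto K n} \<subseteq> {x \<in> B_carrier K. decode x \<in> S}"
    using V(2) decode_agree_upto unfolding agree_upto_def by blast
  then show "\<exists>U\<in>B_uniformity K. {x'. (x, x') \<in> U} \<subseteq> {x \<in> B_carrier K. decode x \<in> S}"
    using agree_upto_in_B_uniformity by blast
qed blast

text \<open>Openness transfers forward because \<open>decode\<close> maps the cylinder \<open>agree_upto K n\<close> around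
  \<open>x\<close> onto the whole class \<open>E n\<close> of \<open>decode x\<close>.\<close>
lemma openin_if_openin_preimage_decode:
  assumes "S \<subseteq> Y" "openin (utopology (B_carrier K) (B_uniformity K)) {x \<in> B_carrier K. decode x \<in> S}"
  shows "openin (utopology Y \<Psi>) S"
  unfolding openin_utopology[OF uniformity]
proof (intro conjI ballI \<open>S \<subseteq> Y\<close>)
  fix y assume "y \<in> S"
  then have "y \<in> decode ` B_carrier K"
    using decode_image \<open>S \<subseteq> Y\<close> by blast
  then obtain x where x: "x \<in> B_carrier K" "decode x = y"
    by blast
  then obtain U where U: "U \<in> B_uniformity K" "{x'. (x, x') \<in> U} \<subseteq> {x \<in> B_carrier K. decode x \<in> S}"
    using assms(2) \<open>y \<in> S\<close> unfolding openin_utopology[OF B_uniformity_on] by blast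
  then obtain n where n: "agree_upto K n \<subseteq> U"
    unfolding B_uniformity_eq by blast
  have "z \<in> S" if "(y, z) \<in> E n" for z
  proof -
    have "(track E a x n, z) \<in> E n"
      using decode(2)[OF x(1)] x(2) that E_trans by blast
    then obtain x' where "(x, x') \<in> agree_upto K n" "decode x' = z"
      using decode_hits[OF x(1)] E_subset that by blast
    then show "z \<in> S"
      using n U(2) by blast
  qed
  then show "\<exists>U\<in>\<Psi>. {z. (y, z) \<in> U} \<subseteq> S"
    using E_in by blast
qed

lemma quotient_map_decode:
  "quotient_map (utopology (B_carrier K) (B_uniformity K)) (utopology Y \<Psi>) decode"
  unfolding quotient_map_def topspace_utopology[OF B_uniformity_on] topspace_utopology[OF uniformity]
  using decode_image openin_preimage_decode openin_if_openin_preimage_decode by blast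

end

lemma (in complete_equiv_chain) ex_uniform_quotient_map_from_B:
  assumes "weight_le (utopology Y \<Psi>) K" "Y \<noteq> {}"
  shows "\<exists>f. uniformly_continuous_on_u (B_carrier K) (B_uniformity K) Y \<Psi> f
           \<and> f ` B_carrier K = Y
           \<and> quotient_map (utopology (B_carrier K) (B_uniformity K)) (utopology Y \<Psi>) f"
proof -
  obtain a where "a ` K \<subseteq> Y" "\<And>y n. y \<in> Y \<Longrightarrow> \<exists>k\<in>K. (y, a k) \<in> E n"
    using dense_labelling[OF assms] by blast
  then interpret labelled_equiv_chain Y E \<Psi> K a
    by unfold_locales
  show ?thesis
    using uniformly_continuous_decode decode_image quotient_map_decode by blast
qed

lemma NA_complete_metric_equiv_chain:
  assumes "uniform_space_on Y \<Psi>" "non_archimedean Y \<Psi>" "complete_metric_uniformity Y \<Psi>"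
  obtains E where "complete_equiv_chain Y E \<Psi>"
proof -
  obtain d where d: "Metric_space Y d" "Metric_space.mcomplete Y d" "\<Psi> = metric_uniformity Y d"
    using assms(3) unfolding complete_metric_uniformity_def by blast
  obtain E where E: "equiv_chain Y E" "\<And>n. E n \<in> \<Psi>"
    and small: "\<And>n. E n \<subseteq> metric_entourage Y d ((1/2)^n)"
    using non_archimedean_metric_equiv_chain assms(1,2) d(3) unfolding uniform_space_on_def by blast
  interpret equiv_chain Y E
    by (fact E(1))
  have "\<exists>n. E n \<subseteq> U" if U: "U \<in> \<Psi>" for U
  proof -
    obtain r where r: "r > 0" "metric_entourage Y d r \<subseteq> U"
      using U unfolding d(3) metric_uniformity_iff by blast
    obtain n where "(1/2::real)^n < r"
      using real_arch_pow_inv[OF r(1), of "1/2"] by auto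
    then have "metric_entourage Y d ((1/2)^n) \<subseteq> metric_entourage Y d r"
      unfolding metric_entourage_def by auto
    then show ?thesis
      using small[of n] r(2) by blast
  qed
  then have "complete_equiv_chain Y E \<Psi>"
    using assms(1) E(2) chain_limit_if_mcomplete[OF d(1,2) small] d(3)
    by unfold_locales blast+
  then show ?thesis
    using that by blast
qed

theorem lemma6p2:
  fixes K :: "'k set" and Y :: "'b set" and \<Psi> :: "('b \<times> 'b) set set"
  assumes "infinite K"
    and "NA_cm_class K Y \<Psi>"
    and "Y \<noteq> {}"
  shows "NA_cm_class K (B_carrier K) (B_uniformity K)
    \<and> (\<exists>f. uniformly_continuous_on_u (B_carrier K) (B_uniformity K) Y \<Psi> f
           \<and> f ` B_carrier K = Y
           \<and> quotient_map (utopology (B_carrier K) (B_uniformity K)) (utopology Y \<Psi>) f)"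
proof
  show "NA_cm_class K (B_carrier K) (B_uniformity K)"
    using B_in_NA_cm_class[OF assms(1)] .
  have Y: "uniform_space_on Y \<Psi>" "non_archimedean Y \<Psi>" "complete_metric_uniformity Y \<Psi>"
    and weight: "weight_le (utopology Y \<Psi>) K"
    using assms(2) unfolding NA_cm_class_def by blast+
  obtain E where "complete_equiv_chain Y E \<Psi>"
    using NA_complete_metric_equiv_chain[OF Y] .
  then show "\<exists>f. uniformly_continuous_on_u (B_carrier K) (B_uniformity K) Y \<Psi> f
      \<and> f ` B_carrier K = Y
      \<and> quotient_map (utopology (B_carrier K) (B_uniformity K)) (utopology Y \<Psi>) f"
    using complete_equiv_chain.ex_uniform_quotient_map_from_B weight assms(3) by blast
qed

end
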